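(* Let $\Gamma$ be a finite graph and $S_0\subseteq\mathrm V(\Gamma)$ such that $\Gamma$ is dense with respect to $S_0$. Then the standard double cover of $\Gamma$, with vertex set $\mathrm V(\Gamma)\times\{0,1\}$, is dense with respect to $S_0\times\{0,1\}$.
   Context: The standard double cover of a graph $\Gamma$ is the graph with vertex set $\mathrm V(\Gamma)\times\{0,1\}$ in which $(u,i)$ is adjacent to $(v,j)$ if and only if $u$ is adjacent to $v$ in $\Gamma$ and $i\neq j$. Density: given a graph $\Delta$ and $T_0\subseteq\mathrm V(\Delta)$, start with $T=T_0$; while there is a vertex $x\notin T$ with at least two neighbours in $T$, add $x$ to $T$. If this procedure ends with $T=\mathrm V(\Delta)$, then $\Delta$ is said to be dense with respect to $T_0$. *)

theory Defs
  imports Main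
begin

definition simple_graph :: "'a set \<Rightarrow> ('a \<Rightarrow> 'a \<Rightarrow> bool) \<Rightarrow> bool" where
  "simple_graph V E \<longleftrightarrow> (\<forall>u v. E u v \<longrightarrow> u \<in> V \<and> v \<in> V) \<and>
     (\<forall>u v. E u v \<longrightarrow> E v u) \<and> (\<forall>u. \<not> E u u)"

inductive_set dense_closure :: "'a set \<Rightarrow> ('a \<Rightarrow> 'a \<Rightarrow> bool) \<Rightarrow> 'a set \<Rightarrow> 'a set"
  for V E T0 where
  base: "x \<in> T0 \<Longrightarrow> x \<in> dense_closure V E T0"
| step: "\<lbrakk>x \<in> V; y \<in> dense_closure V E T0; z \<in> dense_closure V E T0; y \<noteq> z;
          E x y; E x z\<rbrakk> \<Longrightarrow> x \<in> dense_closure V E T0"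

definition dense_wrt :: "'a set \<Rightarrow> ('a \<Rightarrow> 'a \<Rightarrow> bool) \<Rightarrow> 'a set \<Rightarrow> bool" where
  "dense_wrt V E T0 \<longleftrightarrow> dense_closure V E T0 = V"

definition double_cover_V :: "'a set \<Rightarrow> ('a \<times> bool) set" where
  "double_cover_V V = V \<times> UNIV"

definition double_cover_E :: "('a \<Rightarrow> 'a \<Rightarrow> bool) \<Rightarrow> ('a \<times> bool) \<Rightarrow> ('a \<times> bool) \<Rightarrow> bool" where
  "double_cover_E E p q \<longleftrightarrow> E (fst p) (fst q) \<and> snd p \<noteq> snd q"

end

theory Submission
  imports Defs
begin

text \<open>Every step of the closure procedure in \<open>\<Gamma>\<close> lifts to both layers of the double cover:
  if \<open>x\<close> is added because of two neighbours \<open>y \<noteq> z\<close>, then \<open>(x, b)\<close> has the two neighbours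
  \<open>(y, \<not> b)\<close> and \<open>(z, \<not> b)\<close>, which are already in the closure by induction.\<close>

lemma dense_closure_subset:
  assumes "T0 \<subseteq> V"
  shows "dense_closure V E T0 \<subseteq> V"
proof
  fix x assume "x \<in> dense_closure V E T0"
  then show "x \<in> V"
    by induction (use assms in auto)
qed

lemma dense_closure_double_cover_lift:
  assumes "x \<in> dense_closure V E T0"
  shows "(x, b) \<in> dense_closure (double_cover_V V) (double_cover_E E) (T0 \<times> UNIV)"
  using assms
proof (induction arbitrary: b)
  case (base x)
  then show ?case by (simp add: dense_closure.base)
next
  case (step x y z)
  have "(x, b) \<in> double_cover_V V" "(y, \<not> b) \<noteq> (z, \<not> b)"
    "double_cover_E E (x, b) (y, \<not> b)" "double_cover_E E (x, b) (z, \<not> b)"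
    using step.hyps by (auto simp: double_cover_V_def double_cover_E_def)
  with step.IH show ?case
    by (blast intro: dense_closure.step)
qed

theorem lemma3p6:
  fixes V :: "'a set" and E :: "'a \<Rightarrow> 'a \<Rightarrow> bool" and S0 :: "'a set"
  assumes "finite V" and "simple_graph V E" and "S0 \<subseteq> V" and "dense_wrt V E S0"
  shows "dense_wrt (double_cover_V V) (double_cover_E E) (S0 \<times> UNIV)"
  unfolding dense_wrt_def
proof
  show "dense_closure (double_cover_V V) (double_cover_E E) (S0 \<times> UNIV) \<subseteq> double_cover_V V"
    using assms(3) by (intro dense_closure_subset) (auto simp: double_cover_V_def)
  show "double_cover_V V \<subseteq> dense_closure (double_cover_V V) (double_cover_E E) (S0 \<times> UNIV)"
    using assms(4) dense_closure_double_cover_lift[of _ V E S0]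
    by (auto simp: dense_wrt_def double_cover_V_def)
qed

end
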